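(* Let $\delta>0$ and let $O_2$ be an optimal solution of $I_2$ (assumed to exist). Then the optimal cost of the capacitated facility location instance $I_{cap}$ is at most $(1+2\delta)\,\mathrm{Cost}_{I_2}(O_2)$.
   Context: Let $\mathcal F^t$ be a finite set of points (facilities) in a metric space with metric $c$, $|\mathcal F^t|\ge2$, and let $n_i\ge1$ be an integer for each $i\in\mathcal F^t$ ($n_i$ clients are co-located at $i$); let $\mathcal L\ge1$ be an integer. The instance $I_2$ is the lower-bounded facility location instance with facility set $\mathcal F^t$, all opening costs $0$, the $\sum_in_i$ clients (those at $i$ located at $i$), and lower bound $\mathcal L$: a feasible solution opens a subset of $\mathcal F^t$ and assigns every client to an opened facility so that every opened facility receives at least $\mathcal L$ clients; its cost is the sum of client–facility distances. For $i\in\mathcal F^t$ let $l(i)=\min_{i'\in\mathcal F^t,i'\ne i}c(i,i')$. Call $i$ small if $n_i\le\mathcal L$ and big if $n_i>\mathcal L$. The capacitated facility location instance $I_{cap}$ is defined as follows: for small $i$ there is one facility at location $i$ with capacity $\mathcal L$ and opening cost $\delta n_il(i)$, and a demand of $\mathcal L-n_i$ units at $i$; for big $i$ there are two facilities at location $i$: $i_1$ with capacity $\mathcal L$ and opening cost $\delta\mathcal Ll(i)$, and $i_2$ with capacity $n_i-\mathcal L$ and opening cost $0$, and no demand at $i$. A feasible solution of $I_{cap}$ opens some of these facilities and assigns all demand units to opened facilities without exceeding capacities; its cost is the total opening cost plus the sum over demand units of the distance between the unit's location and its facility's location (co-located points have distance $0$). *)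

theory Defs
  imports Complex_Main
begin

text \<open>Points live in an arbitrary metric space (type class metric_space), metric c = dist.
  Facilities: a finite set F of points; n i clients co-located at i; lower bound L.\<close>

definition lmin :: "'a::metric_space set \<Rightarrow> 'a \<Rightarrow> real" where
  "lmin F i = Min {dist i i' | i'. i' \<in> F \<and> i' \<noteq> i}"

definition I2_clients :: "'a set \<Rightarrow> ('a \<Rightarrow> nat) \<Rightarrow> ('a \<times> nat) set" where
  "I2_clients F n = {(i, k). i \<in> F \<and> k < n i}"

definition I2_feasible ::
  "'a set \<Rightarrow> ('a \<Rightarrow> nat) \<Rightarrow> nat \<Rightarrow> 'a set \<Rightarrow> ('a \<times> nat \<Rightarrow> 'a) \<Rightarrow> bool" where
  "I2_feasible F n L S \<sigma> \<longleftrightarrow>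
     S \<subseteq> F \<and> (\<forall>c \<in> I2_clients F n. \<sigma> c \<in> S) \<and>
     (\<forall>j \<in> S. L \<le> card {c \<in> I2_clients F n. \<sigma> c = j})"

definition I2_cost :: "'a::metric_space set \<Rightarrow> ('a \<Rightarrow> nat) \<Rightarrow> ('a \<times> nat \<Rightarrow> 'a) \<Rightarrow> real" where
  "I2_cost F n \<sigma> = (\<Sum>c \<in> I2_clients F n. dist (fst c) (\<sigma> c))"

definition cap_facilities :: "'a set \<Rightarrow> ('a \<Rightarrow> nat) \<Rightarrow> nat \<Rightarrow> ('a \<times> nat) set" where
  "cap_facilities F n L = {(i, 1) | i. i \<in> F} \<union> {(i, 2) | i. i \<in> F \<and> L < n i}"

definition cap_capacity :: "('a \<Rightarrow> nat) \<Rightarrow> nat \<Rightarrow> 'a \<times> nat \<Rightarrow> nat" where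
  "cap_capacity n L f = (if snd f = 1 then L else n (fst f) - L)"

definition cap_open_cost ::
  "real \<Rightarrow> 'a::metric_space set \<Rightarrow> ('a \<Rightarrow> nat) \<Rightarrow> nat \<Rightarrow> 'a \<times> nat \<Rightarrow> real" where
  "cap_open_cost \<delta> F n L f =
     (if snd f = 1 then
        (if n (fst f) \<le> L then \<delta> * real (n (fst f)) * lmin F (fst f)
         else \<delta> * real L * lmin F (fst f))
      else 0)"

definition cap_demand :: "'a set \<Rightarrow> ('a \<Rightarrow> nat) \<Rightarrow> nat \<Rightarrow> ('a \<times> nat) set" where
  "cap_demand F n L = {(i, k). i \<in> F \<and> n i \<le> L \<and> k < L - n i}"

definition cap_feasible ::
  "'a set \<Rightarrow> ('a \<Rightarrow> nat) \<Rightarrow> nat \<Rightarrow> ('a \<times> nat) set \<Rightarrow> ('a \<times> nat \<Rightarrow> 'a \<times> nat) \<Rightarrow> bool" where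
  "cap_feasible F n L T \<tau> \<longleftrightarrow>
     T \<subseteq> cap_facilities F n L \<and> (\<forall>u \<in> cap_demand F n L. \<tau> u \<in> T) \<and>
     (\<forall>f \<in> T. card {u \<in> cap_demand F n L. \<tau> u = f} \<le> cap_capacity n L f)"

definition cap_cost ::
  "real \<Rightarrow> 'a::metric_space set \<Rightarrow> ('a \<Rightarrow> nat) \<Rightarrow> nat \<Rightarrow> ('a \<times> nat) set
     \<Rightarrow> ('a \<times> nat \<Rightarrow> 'a \<times> nat) \<Rightarrow> real" where
  "cap_cost \<delta> F n L T \<tau> =
     (\<Sum>f \<in> T. cap_open_cost \<delta> F n L f) +
     (\<Sum>u \<in> cap_demand F n L. dist (fst u) (fst (\<tau> u)))"

end

theory Submission
  imports Defs "HOL-Combinatorics.Transposition"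
begin

text \<open>If a client a leaves its location i while a client b from elsewhere is sent to i,
  exchanging the destinations of a and b keeps every load and, by the triangle inequality, does
  not increase the cost. So we may assume that no location both sends and receives clients.
  A location i that serves nobody gets its capacity-L copy opened; the opening cost
  \<delta> min(n i, L) l(i) is at most \<delta> times the cost of the n i clients at i, each of which travels
  at least l(i). The L - n i demand units at a small serving location i are matched injectively
  with clients that travel to i from other locations and are sent back along the same edges, so
  the connection cost of I_cap is at most the cost of I_2. Since a location that sends clients
  away keeps at least L of its own, the clients it sends away fit into its second copy.\<close>

lemma I2_clients_eq_Sigma: "I2_clients F n = Sigma F (\<lambda>i. {..<n i})"
  unfolding I2_clients_def by auto

lemma finite_I2_clients: "finite F \<Longrightarrow> finite (I2_clients F n)"
  unfolding I2_clients_eq_Sigma by auto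

lemma I2_clients_at: "i \<in> F \<Longrightarrow> {c \<in> I2_clients F n. fst c = i} = {i} \<times> {..<n i}"
  unfolding I2_clients_def by auto

lemma card_I2_clients_at: "i \<in> F \<Longrightarrow> card {c \<in> I2_clients F n. fst c = i} = n i"
  by (simp add: I2_clients_at card_cartesian_product_singleton)

lemma lmin_le_dist:
  assumes "finite F" "j \<in> F" "j \<noteq> i"
  shows "lmin F i \<le> dist i j"
  unfolding lmin_def using assms by (intro Min_le) auto

lemma lmin_nonneg:
  assumes "finite F" "card F \<ge> 2" "i \<in> F"
  shows "0 \<le> lmin F i"
proof -
  have "\<not> F \<subseteq> {i}"
    using card_mono[of "{i}" F] assms by auto
  then obtain j where "j \<in> F" "j \<noteq> i" by blast
  moreover have "finite {dist i i' | i'. i' \<in> F \<and> i' \<noteq> i}"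
    using assms(1) by simp
  ultimately show ?thesis
    unfolding lmin_def by (subst Min_ge_iff) auto
qed

lemma cap_open_cost_first_copy_le:
  assumes "0 \<le> \<delta>" "0 \<le> lmin F i"
  shows "cap_open_cost \<delta> F n L (i, 1) \<le> \<delta> * (real (n i) * lmin F i)"
proof -
  have "real (min (n i) L) * lmin F i \<le> real (n i) * lmin F i"
    using assms(2) by (intro mult_right_mono) auto
  then show ?thesis
    using assms(1) mult_left_mono by (fastforce simp: cap_open_cost_def)
qed

section \<open>Transit-free assignments of I_2\<close>

definition I2_assignment :: "'a set \<Rightarrow> ('a \<Rightarrow> nat) \<Rightarrow> nat \<Rightarrow> ('a \<times> nat \<Rightarrow> 'a) \<Rightarrow> bool" where
  "I2_assignment F n L s \<longleftrightarrow>
     (\<forall>c \<in> I2_clients F n. s c \<in> F \<and> L \<le> card {c' \<in> I2_clients F n. s c' = s c})"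

definition no_transit :: "'a set \<Rightarrow> ('a \<Rightarrow> nat) \<Rightarrow> ('a \<times> nat \<Rightarrow> 'a) \<Rightarrow> bool" where
  "no_transit F n s \<longleftrightarrow>
     (\<forall>a \<in> I2_clients F n. \<forall>c \<in> I2_clients F n. s a \<noteq> fst a \<longrightarrow> s c = fst a \<longrightarrow> fst c = fst a)"

lemma I2_feasible_imp_assignment: "I2_feasible F n L S \<sigma> \<Longrightarrow> I2_assignment F n L \<sigma>"
  unfolding I2_feasible_def I2_assignment_def by blast

lemma I2_assignment_comp_permutation:
  assumes "bij_betw p (I2_clients F n) (I2_clients F n)" "I2_assignment F n L s"
  shows "I2_assignment F n L (s \<circ> p)"
proof -
  let ?C = "I2_clients F n"
  have "p ` {c \<in> ?C. s (p c) = j} = {c \<in> ?C. s c = j}" for j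
    using assms(1) unfolding bij_betw_def by force
  then have "card {c \<in> ?C. s (p c) = j} = card {c \<in> ?C. s c = j}" for j
    by (metis (no_types, lifting) assms(1) bij_betw_def card_image inj_on_subset mem_Collect_eq subsetI)
  then show ?thesis
    using assms unfolding I2_assignment_def bij_betw_def by auto
qed

lemma I2_cost_transpose_le:
  fixes s :: "'a::metric_space \<times> nat \<Rightarrow> 'a"
  assumes "finite F" "a \<in> I2_clients F n" "b \<in> I2_clients F n" "a \<noteq> b" "s b = fst a"
  shows "I2_cost F n (s \<circ> transpose a b) \<le> I2_cost F n s"
proof -
  let ?C = "I2_clients F n"
  have "finite ?C" using assms(1) by (rule finite_I2_clients)
  then have split: "sum h ?C = h a + h b + sum h (?C - {a, b})" for h :: "'a \<times> nat \<Rightarrow> real"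
    using sum.subset_diff[of "{a, b}" ?C h] assms by (simp add: add.commute)
  have "dist (fst b) (s a) \<le> dist (fst b) (fst a) + dist (fst a) (s a)"
    by (rule dist_triangle)
  moreover have "sum (\<lambda>c. dist (fst c) (s (transpose a b c))) (?C - {a, b})
      = sum (\<lambda>c. dist (fst c) (s c)) (?C - {a, b})"
    by (rule sum.cong) auto
  ultimately show ?thesis
    unfolding I2_cost_def using assms split by (simp add: dist_commute)
qed

lemma no_transit_assignment_exists:
  fixes s :: "'a::metric_space \<times> nat \<Rightarrow> 'a"
  assumes "finite F" "I2_assignment F n L s"
  obtains s' where "I2_assignment F n L s'" "I2_cost F n s' \<le> I2_cost F n s" "no_transit F n s'"
  using assms(2)
proof (induction "card {c \<in> I2_clients F n. s c \<noteq> fst c}" arbitrary: s rule: less_induct)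
  case less
  let ?C = "I2_clients F n"
  show ?case
  proof (cases "no_transit F n s")
    case True
    then show ?thesis using less.prems by blast
  next
    case False
    then obtain a b where ab: "a \<in> ?C" "b \<in> ?C" "s a \<noteq> fst a" "s b = fst a" "fst b \<noteq> fst a"
      unfolding no_transit_def by blast
    define s1 where "s1 = s \<circ> transpose a b"
    have "a \<noteq> b" using ab by auto
    have "I2_assignment F n L s1"
      unfolding s1_def using ab less.prems(2)
      by (intro I2_assignment_comp_permutation) auto
    moreover have "I2_cost F n s1 \<le> I2_cost F n s"
      unfolding s1_def using I2_cost_transpose_le[where s = s, OF assms(1) ab(1,2) \<open>a \<noteq> b\<close> ab(4)] .
    moreover have "{c \<in> ?C. s1 c \<noteq> fst c} \<subset> {c \<in> ?C. s c \<noteq> fst c}"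
      using ab \<open>a \<noteq> b\<close> unfolding s1_def by (auto simp: transpose_def)
    then have "card {c \<in> ?C. s1 c \<noteq> fst c} < card {c \<in> ?C. s c \<noteq> fst c}"
      by (rule psubset_card_mono[rotated]) (simp add: assms(1) finite_I2_clients)
    ultimately show ?thesis
      using less.hyps[of s1] less.prems(1) by (meson order_trans)
  qed
qed

section \<open>From a transit-free assignment to a solution of I_cap\<close>

locale no_transit_assignment =
  fixes F :: "'a::metric_space set" and n :: "'a \<Rightarrow> nat" and L :: nat
    and s :: "'a \<times> nat \<Rightarrow> 'a"
  assumes finite_F: "finite F"
    and assignment: "I2_assignment F n L s"
    and no_transit: "no_transit F n s"
begin

abbreviation clients :: "('a \<times> nat) set" where
  "clients \<equiv> I2_clients F n"

abbreviation demand :: "('a \<times> nat) set" where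
  "demand \<equiv> cap_demand F n L"

definition closed :: "'a set" where
  "closed = {i \<in> F. \<forall>c \<in> clients. s c \<noteq> i}"

definition incoming :: "'a \<Rightarrow> ('a \<times> nat) set" where
  "incoming i = {c \<in> clients. s c = i \<and> fst c \<noteq> i}"

definition leaving :: "'a \<Rightarrow> ('a \<times> nat) set" where
  "leaving i = {c \<in> clients. fst c = i \<and> s c \<noteq> i}"

lemma finite_clients: "finite clients"
  using finite_F by (rule finite_I2_clients)

lemma finite_demand: "finite demand"
proof -
  have "demand \<subseteq> F \<times> {..<L}"
    unfolding cap_demand_def by auto
  then show ?thesis
    using finite_F finite_subset by blast
qed

lemma assigned_in_F: "c \<in> clients \<Longrightarrow> s c \<in> F"
  using assignment unfolding I2_assignment_def by blast

lemma L_le_card_assigned: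
  assumes "i \<in> F - closed"
  shows "L \<le> card {c \<in> clients. s c = i}"
  using assms assignment unfolding closed_def I2_assignment_def by auto

lemma card_incoming_ge:
  assumes "i \<in> F - closed"
  shows "L - n i \<le> card (incoming i)"
proof -
  let ?Home = "{c \<in> clients. fst c = i}"
  have "finite (incoming i)" "finite ?Home"
    using finite_clients unfolding incoming_def by auto
  moreover have "{c \<in> clients. s c = i} \<subseteq> incoming i \<union> ?Home"
    unfolding incoming_def by auto
  ultimately have "card {c \<in> clients. s c = i} \<le> card (incoming i \<union> ?Home)"
    by (intro card_mono) auto
  also have "\<dots> \<le> card (incoming i) + card ?Home"
    by (rule card_Un_le)
  also have "card ?Home = n i"
    using assms by (simp add: card_I2_clients_at)
  finally show ?thesis
    using L_le_card_assigned[OF assms] by linarith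
qed

text \<open>Without transit, a facility that sends clients away serves only its own clients.\<close>

lemma L_add_card_leaving_le:
  assumes "i \<in> F - closed" "leaving i \<noteq> {}"
  shows "L + card (leaving i) \<le> n i"
proof -
  let ?Home = "{c \<in> clients. fst c = i}" and ?Served = "{c \<in> clients. s c = i}"
  obtain b where b: "b \<in> clients" "fst b = i" "s b \<noteq> i"
    using assms(2) unfolding leaving_def by auto
  have "fst c = i" if "c \<in> ?Served" for c
    using no_transit b that unfolding no_transit_def by blast
  then have "?Served \<union> leaving i \<subseteq> ?Home"
    unfolding leaving_def by auto
  then have "card (?Served \<union> leaving i) \<le> card ?Home"
    using finite_clients by (intro card_mono) auto
  also have "card ?Home = n i"
    using assms(1) by (simp add: card_I2_clients_at)
  finally have "card (?Served \<union> leaving i) \<le> n i" .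
  moreover have "card (?Served \<union> leaving i) = card ?Served + card (leaving i)"
    using finite_clients by (intro card_Un_disjoint) (auto simp: leaving_def)
  ultimately show ?thesis
    using L_le_card_assigned[OF assms(1)] by linarith
qed

lemma card_leaving_le: "i \<in> F - closed \<Longrightarrow> card (leaving i) \<le> n i - L"
  using L_add_card_leaving_le[of i] by fastforce

lemma L_less_if_leaving:
  assumes "i \<in> F - closed" "c \<in> leaving i"
  shows "L < n i"
proof -
  have "finite (leaving i)"
    using finite_clients unfolding leaving_def by auto
  then have "0 < card (leaving i)"
    using assms(2) card_gt_0_iff by blast
  then show ?thesis
    using L_add_card_leaving_le[OF assms(1)] assms(2) by fastforce
qed

definition demand_at_open :: "('a \<times> nat) set" where
  "demand_at_open = {u \<in> demand. fst u \<notin> closed}"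

definition donor_enum :: "'a \<Rightarrow> nat \<Rightarrow> 'a \<times> nat" where
  "donor_enum i = (SOME h. h ` {..<L - n i} \<subseteq> incoming i \<and> inj_on h {..<L - n i})"

definition donor :: "'a \<times> nat \<Rightarrow> 'a \<times> nat" where
  "donor u = donor_enum (fst u) (snd u)"

lemma donor_enum_spec:
  assumes "i \<in> F - closed"
  shows "donor_enum i ` {..<L - n i} \<subseteq> incoming i \<and> inj_on (donor_enum i) {..<L - n i}"
proof -
  have "finite (incoming i)"
    using finite_clients unfolding incoming_def by auto
  then have "\<exists>h. h ` {..<L - n i} \<subseteq> incoming i \<and> inj_on h {..<L - n i}"
    using card_le_inj[of "{..<L - n i}" "incoming i"] card_incoming_ge[OF assms] by simp
  then show ?thesis
    unfolding donor_enum_def by (rule someI_ex)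
qed

lemma donor_in_incoming:
  assumes "u \<in> demand_at_open"
  shows "donor u \<in> incoming (fst u)"
proof -
  have "fst u \<in> F - closed" "snd u \<in> {..<L - n (fst u)}"
    using assms unfolding demand_at_open_def cap_demand_def by auto
  then show ?thesis
    using donor_enum_spec[of "fst u"] unfolding donor_def by blast
qed

lemma donor_in_clients: "u \<in> demand_at_open \<Longrightarrow> donor u \<in> clients"
  using donor_in_incoming unfolding incoming_def by auto

lemma inj_on_donor: "inj_on donor demand_at_open"
proof (rule inj_onI)
  fix u v
  assume uv: "u \<in> demand_at_open" "v \<in> demand_at_open" "donor u = donor v"
  then have "fst u = fst v"
    using donor_in_incoming unfolding incoming_def by (metis (mono_tags, lifting) mem_Collect_eq)
  moreover have "fst u \<in> F - closed" "snd u < L - n (fst u)" "snd v < L - n (fst u)"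
    using uv \<open>fst u = fst v\<close> unfolding demand_at_open_def cap_demand_def by auto
  ultimately show "u = v"
    using uv(3) donor_enum_spec[of "fst u"] unfolding donor_def by (simp add: inj_on_def prod_eq_iff)
qed

text \<open>The capacity-L copy at a closed location i takes its own L - n i units and the donors
  among the first L clients at i, at most L in total. Every other donor lives at a big location,
  for an open one by transit-freeness, so its unit can go to the second copy there.\<close>

definition cap_assignment :: "'a \<times> nat \<Rightarrow> 'a \<times> nat" where
  "cap_assignment u =
     (if fst u \<in> closed then (fst u, 1)
      else if fst (donor u) \<in> closed \<and> snd (donor u) < L then (fst (donor u), 1)
      else (fst (donor u), 2))"

definition cap_opened :: "('a \<times> nat) set" where
  "cap_opened = {(i, 1) | i. i \<in> closed} \<union> {(i, 2) | i. i \<in> F \<and> L < n i}"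

lemma cap_assignment_in_cap_opened:
  assumes "u \<in> demand"
  shows "cap_assignment u \<in> cap_opened"
proof (cases "fst u \<in> closed")
  case True
  then show ?thesis unfolding cap_assignment_def cap_opened_def by auto
next
  case False
  then have u: "u \<in> demand_at_open"
    using assms unfolding demand_at_open_def by auto
  define b where "b = donor u"
  have b: "b \<in> clients" "s b \<noteq> fst b"
    using donor_in_incoming[OF u] unfolding b_def incoming_def by auto
  then have "fst b \<in> F" "snd b < n (fst b)"
    unfolding I2_clients_def by auto
  moreover have "L < n (fst b)" if "\<not> (fst b \<in> closed \<and> snd b < L)"
  proof (cases "fst b \<in> closed")
    case True
    then show ?thesis using that \<open>snd b < n (fst b)\<close> by auto
  next
    case False
    then show ?thesis
      using L_less_if_leaving[of "fst b" b] b \<open>fst b \<in> F\<close> unfolding leaving_def by auto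
  qed
  ultimately show ?thesis
    using False unfolding cap_assignment_def cap_opened_def b_def by auto
qed

lemma card_assigned_first_copy_le:
  assumes "i \<in> closed"
  shows "card {u \<in> demand. cap_assignment u = (i, 1)} \<le> L"
proof -
  define Own where "Own = {u \<in> demand. fst u = i}"
  define Donated where "Donated = {u \<in> demand_at_open. fst (donor u) = i \<and> snd (donor u) < L}"
  have "finite (Own \<union> Donated)"
    using finite_demand unfolding Own_def Donated_def demand_at_open_def by auto
  moreover have "{u \<in> demand. cap_assignment u = (i, 1)} \<subseteq> Own \<union> Donated"
    using assms unfolding Own_def Donated_def demand_at_open_def cap_assignment_def
    by (auto split: if_splits)
  ultimately have "card {u \<in> demand. cap_assignment u = (i, 1)} \<le> card (Own \<union> Donated)"
    by (rule card_mono)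
  also have "\<dots> \<le> card Own + card Donated"
    by (rule card_Un_le)
  finally have "card {u \<in> demand. cap_assignment u = (i, 1)} \<le> card Own + card Donated" .
  moreover have "card Own \<le> L - n i"
  proof -
    have "Own \<subseteq> {i} \<times> {..<L - n i}"
      unfolding Own_def cap_demand_def by auto
    then show ?thesis
      using card_mono[of "{i} \<times> {..<L - n i}" Own] by (simp add: card_cartesian_product_singleton)
  qed
  moreover have "card Donated \<le> min (n i) L"
  proof -
    have "donor ` Donated \<subseteq> {i} \<times> {..<min (n i) L}"
      using donor_in_clients unfolding Donated_def I2_clients_def by force
    then have "card Donated \<le> card ({i} \<times> {..<min (n i) L})"
      by (intro card_inj_on_le[of donor] inj_on_subset[OF inj_on_donor]) (auto simp: Donated_def)
    then show ?thesis by (simp add: card_cartesian_product_singleton)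
  qed
  ultimately show ?thesis by linarith
qed

lemma card_assigned_second_copy_le:
  assumes "i \<in> F"
  shows "card {u \<in> demand. cap_assignment u = (i, 2)} \<le> n i - L"
proof -
  define Donated where
    "Donated = {u \<in> demand_at_open. fst (donor u) = i \<and> \<not> (i \<in> closed \<and> snd (donor u) < L)}"
  have "finite Donated"
    using finite_demand unfolding Donated_def demand_at_open_def by auto
  moreover have "{u \<in> demand. cap_assignment u = (i, 2)} \<subseteq> Donated"
    unfolding Donated_def demand_at_open_def cap_assignment_def by (auto split: if_splits)
  ultimately have "card {u \<in> demand. cap_assignment u = (i, 2)} \<le> card Donated"
    by (rule card_mono)
  also have "card Donated \<le> n i - L"
  proof (cases "i \<in> closed")
    case True
    have "donor ` Donated \<subseteq> {i} \<times> {L..<n i}"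
      using donor_in_clients True unfolding Donated_def I2_clients_def by force
    then have "card Donated \<le> card ({i} \<times> {L..<n i})"
      by (intro card_inj_on_le[of donor] inj_on_subset[OF inj_on_donor]) (auto simp: Donated_def)
    then show ?thesis by (simp add: card_cartesian_product_singleton)
  next
    case False
    have "donor ` Donated \<subseteq> leaving i"
      using donor_in_incoming unfolding Donated_def incoming_def leaving_def by force
    then have "card Donated \<le> card (leaving i)"
      using finite_clients
      by (intro card_inj_on_le[of donor] inj_on_subset[OF inj_on_donor])
        (auto simp: Donated_def leaving_def)
    then show ?thesis
      using card_leaving_le[of i] assms False by simp
  qed
  finally show ?thesis .
qed

lemma cap_feasible: "cap_feasible F n L cap_opened cap_assignment"
  unfolding cap_feasible_def
proof (intro conjI ballI)
  show "cap_opened \<subseteq> cap_facilities F n L"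
    unfolding cap_opened_def cap_facilities_def closed_def by auto
  show "cap_assignment u \<in> cap_opened" if "u \<in> demand" for u
    using that by (rule cap_assignment_in_cap_opened)
  fix f assume "f \<in> cap_opened"
  then show "card {u \<in> demand. cap_assignment u = f} \<le> cap_capacity n L f"
    using card_assigned_first_copy_le card_assigned_second_copy_le
    unfolding cap_opened_def cap_capacity_def by auto
qed

lemma sum_cap_open_cost_le:
  assumes "0 \<le> \<delta>" "card F \<ge> 2"
  shows "(\<Sum>f \<in> cap_opened. cap_open_cost \<delta> F n L f) \<le> \<delta> * I2_cost F n s"
proof -
  let ?h = "\<lambda>c. dist (fst c) (s c)"
  have finite_closed: "finite closed"
    using finite_F unfolding closed_def by auto
  have "(\<Sum>f \<in> cap_opened. cap_open_cost \<delta> F n L f)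
      = (\<Sum>f \<in> (\<lambda>i. (i, 1)) ` closed. cap_open_cost \<delta> F n L f)"
    using finite_F finite_closed
    by (intro sum.mono_neutral_right) (auto simp: cap_opened_def cap_open_cost_def)
  also have "\<dots> = (\<Sum>i \<in> closed. cap_open_cost \<delta> F n L (i, 1))"
    by (subst sum.reindex) (auto simp: inj_on_def)
  also have "\<dots> \<le> (\<Sum>i \<in> closed. \<delta> * (\<Sum>k<n i. ?h (i, k)))"
  proof (rule sum_mono)
    fix i assume i: "i \<in> closed"
    then have "i \<in> F" unfolding closed_def by auto
    have "(\<Sum>k<n i. lmin F i) \<le> (\<Sum>k<n i. ?h (i, k))"
    proof (rule sum_mono)
      fix k assume "k \<in> {..<n i}"
      then have "(i, k) \<in> clients"
        using \<open>i \<in> F\<close> unfolding I2_clients_def by auto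
      then have "s (i, k) \<in> F" "s (i, k) \<noteq> i"
        using assigned_in_F i unfolding closed_def by auto
      then show "lmin F i \<le> ?h (i, k)"
        using lmin_le_dist[OF finite_F] by simp
    qed
    then have "\<delta> * (real (n i) * lmin F i) \<le> \<delta> * (\<Sum>k<n i. ?h (i, k))"
      using assms(1) by (simp add: mult_left_mono)
    then show "cap_open_cost \<delta> F n L (i, 1) \<le> \<delta> * (\<Sum>k<n i. ?h (i, k))"
      using cap_open_cost_first_copy_le[OF assms(1) lmin_nonneg[OF finite_F assms(2) \<open>i \<in> F\<close>], of n L]
      by linarith
  qed
  also have "\<dots> = \<delta> * sum ?h (Sigma closed (\<lambda>i. {..<n i}))"
    using finite_closed by (simp add: sum_distrib_left sum.Sigma split_beta')
  also have "\<dots> \<le> \<delta> * I2_cost F n s"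
    unfolding I2_cost_def I2_clients_eq_Sigma using assms(1) finite_F
    by (intro mult_left_mono sum_mono2) (auto simp: closed_def)
  finally show ?thesis .
qed

lemma sum_connection_cost_le:
  "(\<Sum>u \<in> demand. dist (fst u) (fst (cap_assignment u))) \<le> I2_cost F n s"
proof -
  let ?h = "\<lambda>c. dist (fst c) (s c)"
  have "(\<Sum>u \<in> demand. dist (fst u) (fst (cap_assignment u)))
      = (\<Sum>u \<in> demand_at_open. dist (fst u) (fst (cap_assignment u)))"
    using finite_demand
    by (intro sum.mono_neutral_right) (auto simp: demand_at_open_def cap_assignment_def)
  also have "\<dots> = (\<Sum>u \<in> demand_at_open. ?h (donor u))"
  proof (rule sum.cong[OF refl])
    fix u assume u: "u \<in> demand_at_open"
    then have "s (donor u) = fst u" "fst u \<notin> closed"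
      using donor_in_incoming unfolding incoming_def demand_at_open_def by auto
    then show "dist (fst u) (fst (cap_assignment u)) = ?h (donor u)"
      by (simp add: cap_assignment_def dist_commute)
  qed
  also have "\<dots> = sum ?h (donor ` demand_at_open)"
    by (simp add: sum.reindex[OF inj_on_donor])
  also have "\<dots> \<le> sum ?h clients"
    using finite_clients donor_in_clients by (intro sum_mono2) auto
  finally show ?thesis
    unfolding I2_cost_def .
qed

lemma cap_cost_le:
  assumes "0 \<le> \<delta>" "card F \<ge> 2"
  shows "cap_cost \<delta> F n L cap_opened cap_assignment \<le> (1 + \<delta>) * I2_cost F n s"
  using sum_cap_open_cost_le[OF assms] sum_connection_cost_le
  unfolding cap_cost_def by (simp add: algebra_simps)

end

theorem lemma4p1:
  fixes F :: "'a::metric_space set" and n :: "'a \<Rightarrow> nat" and L :: nat and \<delta> :: real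
    and S :: "'a set" and \<sigma> :: "'a \<times> nat \<Rightarrow> 'a"
  assumes "finite F" and "card F \<ge> 2"
    and "\<forall>i \<in> F. n i \<ge> 1" and "L \<ge> 1"
    and "\<delta> > 0"
    and "I2_feasible F n L S \<sigma>"
    and "\<forall>S' \<sigma>'. I2_feasible F n L S' \<sigma>' \<longrightarrow> I2_cost F n \<sigma> \<le> I2_cost F n \<sigma>'"
  shows "\<exists>T \<tau>. cap_feasible F n L T \<tau> \<and>
           cap_cost \<delta> F n L T \<tau> \<le> (1 + 2 * \<delta>) * I2_cost F n \<sigma>"
proof -
  obtain s where s: "I2_assignment F n L s" "I2_cost F n s \<le> I2_cost F n \<sigma>" "no_transit F n s"
    using no_transit_assignment_exists[OF assms(1) I2_feasible_imp_assignment[OF assms(6)]] .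
  interpret no_transit_assignment F n L s
    using assms(1) s by unfold_locales auto
  have "cap_cost \<delta> F n L cap_opened cap_assignment \<le> (1 + \<delta>) * I2_cost F n s"
    using assms(2,5) by (intro cap_cost_le) auto
  also have "\<dots> \<le> (1 + \<delta>) * I2_cost F n \<sigma>"
    using s(2) assms(5) by (intro mult_left_mono) auto
  also have "\<dots> \<le> (1 + 2 * \<delta>) * I2_cost F n \<sigma>"
    using assms(5) by (intro mult_right_mono) (auto simp: I2_cost_def sum_nonneg)
  finally show ?thesis
    using cap_feasible by blast
qed

end
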